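(* The topes of any $(n,d)$-pre-trianguloid are pairwise compatible. Consequently, a collection of topes $\{T_v\}$ indexed by the lattice points $v$ of $n\Delta^{d-1}$ is a pre-trianguloid if and only if it is an extended $(n,d)$-tope arrangement.
   Context: Fix positive integers $n,d$; graphs are subgraphs of the complete bipartite graph with left vertices $[n]$ and right vertices $[\bar d]=\{\bar1,\dots,\bar d\}$. $RD(G)$ is the vector of right-vertex degrees; lattice points of $n\Delta^{d-1}$ are vectors in $\mathbb Z_{\ge0}^{[\bar d]}$ with sum $n$; $e_{\bar j}$ is a unit vector. Two acyclic graphs are compatible if whenever both contain a perfect matching between the same $I\subseteq[n]$, $\bar J\subseteq[\bar d]$, these matchings coincide. A tope is a map $T:[n]\to[\bar d]$ (graph $\{(i,T(i))\}$). An extended $(n,d)$-tope arrangement is a collection of pairwise compatible topes $T_v$, one for each lattice point $v$ of $n\Delta^{d-1}$, with $RD(T_v)=v$. An $(n,d)$-pre-trianguloid is a collection of topes $T_v$, one for each lattice point $v$ of $n\Delta^{d-1}$, with $RD(T_v)=v$, such that whenever $v-e_{\bar j}=v'-e_{\bar j'}$ for lattice points $v,v'$ and $\bar j,\bar j'\in[\bar d]$, we have $T_{v'}^{-1}(\bar j)\subseteq T_v^{-1}(\bar j)$. *)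

theory Defs
  imports Main
begin

text \<open>Left vertices [n] = {1..n}, right vertices [d-bar] = {1..d} (encoded as naturals).
  A graph is a set of edges G \<subseteq> {1..n} \<times> {1..d}.\<close>

definition left_verts :: "nat \<Rightarrow> nat set" where
  "left_verts n = {1..n}"

definition right_verts :: "nat \<Rightarrow> nat set" where
  "right_verts d = {1..d}"

definition perfect_matching :: "(nat \<times> nat) set \<Rightarrow> nat set \<Rightarrow> nat set \<Rightarrow> bool" where
  "perfect_matching M I J \<longleftrightarrow> M \<subseteq> I \<times> J \<and>
     (\<forall>i\<in>I. \<exists>!j. (i, j) \<in> M) \<and> (\<forall>j\<in>J. \<exists>!i. (i, j) \<in> M)"

text \<open>Compatibility of two graphs (the paper only uses it for acyclic graphs;
  tope graphs are always acyclic).\<close>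
definition compatible :: "nat \<Rightarrow> nat \<Rightarrow> (nat \<times> nat) set \<Rightarrow> (nat \<times> nat) set \<Rightarrow> bool" where
  "compatible n d G H \<longleftrightarrow>
     (\<forall>I J M M'. I \<subseteq> left_verts n \<longrightarrow> J \<subseteq> right_verts d \<longrightarrow>
        M \<subseteq> G \<longrightarrow> perfect_matching M I J \<longrightarrow>
        M' \<subseteq> H \<longrightarrow> perfect_matching M' I J \<longrightarrow> M = M')"

text \<open>A tope is a map [n] \<rightarrow> [d-bar]; only its values on [n] matter.\<close>
definition is_tope :: "nat \<Rightarrow> nat \<Rightarrow> (nat \<Rightarrow> nat) \<Rightarrow> bool" where
  "is_tope n d T \<longleftrightarrow> (\<forall>i\<in>left_verts n. T i \<in> right_verts d)"

definition tope_graph :: "nat \<Rightarrow> (nat \<Rightarrow> nat) \<Rightarrow> (nat \<times> nat) set" where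
  "tope_graph n T = {(i, T i) | i. i \<in> left_verts n}"

definition RD :: "nat \<Rightarrow> (nat \<Rightarrow> nat) \<Rightarrow> nat \<Rightarrow> nat" where
  "RD n T j = card {i \<in> left_verts n. T i = j}"

definition tope_preimage :: "nat \<Rightarrow> (nat \<Rightarrow> nat) \<Rightarrow> nat \<Rightarrow> nat set" where
  "tope_preimage n T j = {i \<in> left_verts n. T i = j}"

definition lattice_point :: "nat \<Rightarrow> nat \<Rightarrow> (nat \<Rightarrow> nat) \<Rightarrow> bool" where
  "lattice_point n d v \<longleftrightarrow> (\<forall>j. j \<notin> right_verts d \<longrightarrow> v j = 0) \<and>
     (\<Sum>j\<in>right_verts d. v j) = n"

definition minus_unit :: "(nat \<Rightarrow> nat) \<Rightarrow> nat \<Rightarrow> nat \<Rightarrow> int" where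
  "minus_unit v j = (\<lambda>k. int (v k) - (if k = j then 1 else 0))"

definition extended_tope_arrangement ::
  "nat \<Rightarrow> nat \<Rightarrow> ((nat \<Rightarrow> nat) \<Rightarrow> (nat \<Rightarrow> nat)) \<Rightarrow> bool" where
  "extended_tope_arrangement n d Tf \<longleftrightarrow>
     (\<forall>v. lattice_point n d v \<longrightarrow> is_tope n d (Tf v) \<and> RD n (Tf v) = v) \<and>
     (\<forall>v v'. lattice_point n d v \<longrightarrow> lattice_point n d v' \<longrightarrow>
        compatible n d (tope_graph n (Tf v)) (tope_graph n (Tf v')))"

definition pre_trianguloid ::
  "nat \<Rightarrow> nat \<Rightarrow> ((nat \<Rightarrow> nat) \<Rightarrow> (nat \<Rightarrow> nat)) \<Rightarrow> bool" where
  "pre_trianguloid n d Tf \<longleftrightarrow>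
     (\<forall>v. lattice_point n d v \<longrightarrow> is_tope n d (Tf v) \<and> RD n (Tf v) = v) \<and>
     (\<forall>v v' j j'. lattice_point n d v \<longrightarrow> lattice_point n d v' \<longrightarrow>
        j \<in> right_verts d \<longrightarrow> j' \<in> right_verts d \<longrightarrow>
        minus_unit v j = minus_unit v' j' \<longrightarrow>
        tope_preimage n (Tf v') j \<subseteq> tope_preimage n (Tf v) j)"

end

theory Submission
  imports Defs
begin

(* Two topes fail to be compatible exactly when on some nonempty set D of left vertices they are
   injective with the same image but disagree everywhere, i.e. their graphs over D form
   alternating cycles. For the topes at y + e_b and y + e_c, adjacent to a common lattice point y
   of (n-1)Delta, the exchange condition rules such cycles out by counting fibres. Hence deleting
   a left vertex l is well defined: the new tope at y is the tope at y + e_c, restricted to the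
   other vertices, for any colour c that this tope gives to l; and the result is again a
   pre-trianguloid. Compatibility of T_u and T_w on D then follows by induction, deleting vertices
   outside D until D is everything, where the degree vectors force u = w. Conversely, a failure of
   the exchange condition between the topes at y + e_a and y + e_b produces alternating cycles in
   their disagreement set, contradicting compatibility. *)

section \<open>Alternating cycles of two maps\<close>

lemma exists_subset_inj_on_same_image:
  assumes "finite E" and "E \<noteq> {}" and "f ` E \<subseteq> g ` E"
  obtains I where "I \<subseteq> E" "I \<noteq> {}" "inj_on f I" "inj_on g I" "f ` I = g ` I"
proof -
  let ?P = "\<lambda>I. I \<subseteq> E \<and> I \<noteq> {} \<and> f ` I \<subseteq> g ` I"
  obtain I where P: "?P I" and min: "\<And>I'. ?P I' \<Longrightarrow> card I \<le> card I'"
    using ex_has_least_nat[of ?P E card] assms by blast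
  have fin: "finite I"
    using P assms(1) finite_subset by blast
  \<comment> \<open>A minimal \<open>I\<close> is already covered by \<open>g\<close>-preimages of \<open>f ` I\<close>; this forces
    \<open>g ` I = f ` I\<close> and injectivity of both maps.\<close>
  let ?I' = "inv_into I g ` f ` I"
  have sub: "?I' \<subseteq> I"
    using P by (auto intro: inv_into_into)
  have g_I': "g ` ?I' = f ` I"
    using P by (force simp: image_comp f_inv_into_f)
  have "f ` ?I' \<subseteq> g ` ?I'"
    using sub g_I' by (metis image_mono)
  moreover have "?I' \<noteq> {}"
    using P by simp
  ultimately have "?P ?I'"
    using P sub by (meson subset_trans)
  then have "card I \<le> card ?I'"
    by (rule min)
  also have "\<dots> \<le> card (f ` I)"
    by (rule card_image_le) (use fin in simp)
  finally have card_f: "card I \<le> card (f ` I)" .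
  have "?I' = I"
    using card_seteq[OF fin sub] \<open>card I \<le> card ?I'\<close> by blast
  with g_I' have same: "g ` I = f ` I"
    by simp
  have "card (f ` I) = card I"
    using card_f card_image_le[OF fin, of f] by linarith
  then have "inj_on f I" "inj_on g I"
    using same by (simp_all add: inj_on_iff_eq_card[OF fin])
  then show thesis
    using P same by (intro that) auto
qed

lemma card_fibre_inj_on:
  assumes "inj_on f L"
  shows "card {i\<in>L. f i = a} = (if a \<in> f ` L then 1 else 0)"
proof (cases "a \<in> f ` L")
  case True
  then obtain i where "i \<in> L" "f i = a" by blast
  with assms have "{i\<in>L. f i = a} = {i}"
    by (auto dest: inj_onD)
  with True show ?thesis by simp
next
  case False
  then have "{i\<in>L. f i = a} = {}" by blast
  then show ?thesis
    using False by (simp only: card.empty if_False)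
qed

lemma card_fibre_Diff_singleton:
  assumes "finite L" and "l \<in> L"
  shows "card {i\<in>L - {l}. f i = a} = card {i\<in>L. f i = a} - (if f l = a then 1 else 0)"
proof -
  have "{i\<in>L - {l}. f i = a} = {i\<in>L. f i = a} - {l}"
    by blast
  then show ?thesis
    using assms by (simp add: card_Diff_singleton_if)
qed

text \<open>The graphs of \<open>f\<close> and \<open>g\<close> over \<open>D\<close> are perfect matchings between \<open>D\<close> and
  \<open>f ` D\<close> without a common edge, so their union is a disjoint union of even cycles.\<close>
definition alternating_cycles :: "'a set \<Rightarrow> ('a \<Rightarrow> 'c) \<Rightarrow> ('a \<Rightarrow> 'c) \<Rightarrow> bool" where
  "alternating_cycles D f g \<longleftrightarrow>
     D \<noteq> {} \<and> inj_on f D \<and> inj_on g D \<and> f ` D = g ` D \<and> (\<forall>i\<in>D. f i \<noteq> g i)"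

lemma image_disagreement_subset:
  assumes "finite L"
    and "\<And>a. a \<notin> g ` {j\<in>L. f j \<noteq> g j} \<Longrightarrow> card {j\<in>L. f j = a} \<le> card {j\<in>L. g j = a}"
  shows "f ` {j\<in>L. f j \<noteq> g j} \<subseteq> g ` {j\<in>L. f j \<noteq> g j}"
proof
  let ?E = "{j\<in>L. f j \<noteq> g j}"
  fix a assume "a \<in> f ` ?E"
  then obtain i where i: "i \<in> ?E" "f i = a" by blast
  show "a \<in> g ` ?E"
  proof (rule ccontr)
    assume a: "a \<notin> g ` ?E"
    then have "{j\<in>L. g j = a} \<subseteq> {j\<in>L. f j = a}"
      by blast
    moreover have "i \<in> {j\<in>L. f j = a} - {j\<in>L. g j = a}"
      using i by auto
    ultimately have "{j\<in>L. g j = a} \<subset> {j\<in>L. f j = a}"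
      by blast
    then have "card {j\<in>L. g j = a} < card {j\<in>L. f j = a}"
      using assms(1) by (simp add: psubset_card_mono)
    with assms(2)[OF a] show False by simp
  qed
qed

lemma exists_alternating_cycles:
  assumes "finite L" and "i \<in> L" and "f i \<noteq> g i"
    and "\<And>a. a \<notin> g ` {j\<in>L. f j \<noteq> g j} \<Longrightarrow> card {j\<in>L. f j = a} \<le> card {j\<in>L. g j = a}"
  obtains D where "D \<subseteq> L" "alternating_cycles D f g"
proof -
  let ?E = "{j\<in>L. f j \<noteq> g j}"
  have "finite ?E" "?E \<noteq> {}"
    using assms(1-3) by auto
  moreover have "f ` ?E \<subseteq> g ` ?E"
    using assms(1,4) by (rule image_disagreement_subset)
  ultimately obtain D where "D \<subseteq> ?E" "D \<noteq> {}" "inj_on f D" "inj_on g D" "f ` D = g ` D"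
    by (rule exists_subset_inj_on_same_image)
  then show thesis
    using that unfolding alternating_cycles_def by blast
qed

definition compatible_maps :: "'a set \<Rightarrow> ('a \<Rightarrow> 'c) \<Rightarrow> ('a \<Rightarrow> 'c) \<Rightarrow> bool" where
  "compatible_maps L f g \<longleftrightarrow>
     (\<forall>D\<subseteq>L. inj_on f D \<longrightarrow> inj_on g D \<longrightarrow> f ` D = g ` D \<longrightarrow> (\<forall>i\<in>D. f i = g i))"

lemma compatible_maps_no_alternating_cycles:
  "compatible_maps L f g \<Longrightarrow> D \<subseteq> L \<Longrightarrow> \<not> alternating_cycles D f g"
  unfolding compatible_maps_def alternating_cycles_def by blast

lemma compatible_maps_cong:
  assumes "\<And>i. i \<in> L \<Longrightarrow> f i = f' i" and "\<And>i. i \<in> L \<Longrightarrow> g i = g' i"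
  shows "compatible_maps L f g \<longleftrightarrow> compatible_maps L f' g'"
proof -
  have "inj_on f D = inj_on f' D" "inj_on g D = inj_on g' D" "f ` D = f' ` D" "g ` D = g' ` D"
    "(\<forall>i\<in>D. f i = g i) = (\<forall>i\<in>D. f' i = g' i)" if "D \<subseteq> L" for D
    using that assms by (auto simp: subset_iff intro!: inj_on_cong image_cong)
  then show ?thesis
    unfolding compatible_maps_def by simp
qed

section \<open>Pre-trianguloids on an arbitrary ground set\<close>

definition lattice_vec :: "'c set \<Rightarrow> nat \<Rightarrow> ('c \<Rightarrow> nat) \<Rightarrow> bool" where
  "lattice_vec C k v \<longleftrightarrow> (\<forall>j. j \<notin> C \<longrightarrow> v j = 0) \<and> sum v C = k"

definition plus_unit :: "('c \<Rightarrow> nat) \<Rightarrow> 'c \<Rightarrow> 'c \<Rightarrow> nat" where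
  "plus_unit y a = y(a := Suc (y a))"

lemma plus_unit_apply: "plus_unit y a b = (if b = a then Suc (y b) else y b)"
  by (simp add: plus_unit_def)

lemma plus_unit_commute: "plus_unit (plus_unit y a) b = plus_unit (plus_unit y b) a"
  by (simp add: plus_unit_def fun_eq_iff)

lemma sum_plus_unit:
  assumes "finite C" and "a \<in> C"
  shows "sum (plus_unit y a) C = Suc (sum y C)"
proof -
  have "sum (plus_unit y a) C = plus_unit y a a + sum (plus_unit y a) (C - {a})"
    using assms by (rule sum.remove)
  also have "sum (plus_unit y a) (C - {a}) = sum y (C - {a})"
    by (rule sum.cong) (simp_all add: plus_unit_apply)
  finally show ?thesis
    using assms by (simp add: plus_unit_apply sum.remove)
qed

lemma lattice_vec_plus_unit:
  assumes "finite C" and "a \<in> C"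
  shows "lattice_vec C (Suc k) (plus_unit y a) \<longleftrightarrow> lattice_vec C k y"
proof -
  have "plus_unit y a j = y j" if "j \<notin> C" for j
    using that assms(2) by (auto simp: plus_unit_apply)
  then show ?thesis
    unfolding lattice_vec_def using sum_plus_unit[OF assms] by auto
qed

lemma lattice_vec_plus_unit_minus:
  assumes "finite C" and "lattice_vec C (Suc k) v" and "c \<in> C" and "0 < v c"
  shows "lattice_vec C k (v(c := v c - 1))" and "plus_unit (v(c := v c - 1)) c = v"
proof -
  show eq: "plus_unit (v(c := v c - 1)) c = v"
    using assms(4) by (simp add: plus_unit_def fun_eq_iff)
  show "lattice_vec C k (v(c := v c - 1))"
    using assms(2) lattice_vec_plus_unit[OF assms(1,3), of k "v(c := v c - 1)"] by (simp only: eq)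
qed

definition tope_family :: "'a set \<Rightarrow> 'c set \<Rightarrow> (('c \<Rightarrow> nat) \<Rightarrow> 'a \<Rightarrow> 'c) \<Rightarrow> bool" where
  "tope_family L C T \<longleftrightarrow>
     (\<forall>v. lattice_vec C (card L) v \<longrightarrow> T v ` L \<subseteq> C \<and> (\<forall>a. card {i\<in>L. T v i = a} = v a))"

lemma tope_family_colour:
  "tope_family L C T \<Longrightarrow> lattice_vec C (card L) v \<Longrightarrow> i \<in> L \<Longrightarrow> T v i \<in> C"
  unfolding tope_family_def by blast

lemma tope_family_card_fibre:
  "tope_family L C T \<Longrightarrow> lattice_vec C (card L) v \<Longrightarrow> card {i\<in>L. T v i = a} = v a"
  unfolding tope_family_def by blast

text \<open>The exchange condition of the paper, for lattice points with \<open>v - e\<^sub>a = v' - e\<^sub>b\<close>, is stated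
  in terms of \<open>y = v - e\<^sub>a\<close>, so that \<open>v = y + e\<^sub>a\<close> and \<open>v' = y + e\<^sub>b\<close>.\<close>
definition pre_trianguloid_on :: "'a set \<Rightarrow> 'c set \<Rightarrow> (('c \<Rightarrow> nat) \<Rightarrow> 'a \<Rightarrow> 'c) \<Rightarrow> bool" where
  "pre_trianguloid_on L C T \<longleftrightarrow> tope_family L C T \<and>
     (\<forall>k y a b. lattice_vec C k y \<longrightarrow> Suc k = card L \<longrightarrow> a \<in> C \<longrightarrow> b \<in> C \<longrightarrow>
        {i\<in>L. T (plus_unit y b) i = a} \<subseteq> {i\<in>L. T (plus_unit y a) i = a})"

lemma pre_trianguloid_on_tope_family:
  "pre_trianguloid_on L C T \<Longrightarrow> tope_family L C T"
  unfolding pre_trianguloid_on_def by blast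

text \<open>Deletion of the left vertex \<open>l\<close>: the tope at \<open>y\<close> is the tope at \<open>y + e\<^sub>c\<close> for a colour
  \<open>c\<close> which that tope assigns to \<open>l\<close>. Such a \<open>c\<close> exists as soon as \<open>C \<noteq> {}\<close>, and away from \<open>l\<close>
  the choice does not matter (\<open>fixed_colours_agree\<close>).\<close>
definition contraction ::
  "'c set \<Rightarrow> 'a \<Rightarrow> (('c \<Rightarrow> nat) \<Rightarrow> 'a \<Rightarrow> 'c) \<Rightarrow> ('c \<Rightarrow> nat) \<Rightarrow> 'a \<Rightarrow> 'c" where
  "contraction C l T y = T (plus_unit y (SOME c. c \<in> C \<and> T (plus_unit y c) l = c))"

locale pre_trianguloid_lower_point =
  fixes L :: "'a set" and C :: "'c set" and T :: "('c \<Rightarrow> nat) \<Rightarrow> 'a \<Rightarrow> 'c"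
    and k :: nat and y :: "'c \<Rightarrow> nat"
  assumes pre: "pre_trianguloid_on L C T"
    and finite_L: "finite L" and finite_C: "finite C"
    and lattice_y: "lattice_vec C k y" and card_L: "card L = Suc k"
begin

lemma lattice_plus_unit: "a \<in> C \<Longrightarrow> lattice_vec C (card L) (plus_unit y a)"
  using lattice_y card_L by (simp add: lattice_vec_plus_unit finite_C)

lemma colour: "a \<in> C \<Longrightarrow> i \<in> L \<Longrightarrow> T (plus_unit y a) i \<in> C"
  using tope_family_colour[OF pre_trianguloid_on_tope_family[OF pre] lattice_plus_unit] .

lemma card_fibre: "a \<in> C \<Longrightarrow> card {i\<in>L. T (plus_unit y a) i = b} = plus_unit y a b"
  using tope_family_card_fibre[OF pre_trianguloid_on_tope_family[OF pre] lattice_plus_unit] .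

lemma exchange:
  "a \<in> C \<Longrightarrow> b \<in> C \<Longrightarrow> i \<in> L \<Longrightarrow> T (plus_unit y b) i = a \<Longrightarrow> T (plus_unit y a) i = a"
  using pre lattice_y card_L[symmetric] unfolding pre_trianguloid_on_def by blast

lemma fixed_colour_exists:
  assumes "C \<noteq> {}" and "l \<in> L"
  obtains c where "c \<in> C" and "T (plus_unit y c) l = c"
proof -
  obtain b where "b \<in> C"
    using assms(1) by blast
  then show thesis
    using that colour exchange assms(2) by blast
qed

lemma card_fibre_delete_fixed:
  assumes "c \<in> C" and "l \<in> L" and "T (plus_unit y c) l = c"
  shows "card {i\<in>L - {l}. T (plus_unit y c) i = a} = y a"
  using card_fibre_Diff_singleton[OF finite_L assms(2), of "T (plus_unit y c)" a]
    card_fibre[OF assms(1), of a] assms(3)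
  by (simp add: plus_unit_apply)

lemma fibre_meets_fixed_pair:
  assumes a: "a \<in> C" and r: "r \<in> C" "a \<noteq> r"
    and p: "p \<in> L" "p' \<in> L" "p \<noteq> p'"
    and fixed: "T (plus_unit y a) p = a" "T (plus_unit y a) p' = a"
  shows "T (plus_unit y r) p = a \<or> T (plus_unit y r) p' = a"
proof (rule ccontr)
  let ?F = "\<lambda>x. {i\<in>L. T (plus_unit y x) i = a}"
  assume miss: "\<not> ?thesis"
  have "?F r \<subseteq> ?F a"
    using exchange[OF a r(1)] by blast
  then have "insert p (insert p' (?F r)) \<subseteq> ?F a"
    using p fixed by blast
  then have "card (insert p (insert p' (?F r))) \<le> card (?F a)"
    by (rule card_mono[rotated]) (simp add: finite_L)
  moreover have "card (insert p (insert p' (?F r))) = Suc (Suc (card (?F r)))"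
    using miss p(3) finite_L by simp
  moreover have "card (?F r) = y a" "card (?F a) = Suc (y a)"
    using card_fibre[OF r(1), of a] card_fibre[OF a, of a] r(2) by (simp_all add: plus_unit_apply)
  ultimately show False
    by simp
qed

text \<open>Every colour \<open>a\<close> of the cycles is taken on two vertices of \<open>D\<close>, once by each tope, and
  both keep colour \<open>a\<close> at \<open>y + e\<^sub>a\<close>. Fix such a colour \<open>r\<close>: by \<open>fibre_meets_fixed_pair\<close> the tope
  at \<open>y + e\<^sub>r\<close> still takes all colours of the cycles on \<open>D\<close>, yet it identifies the two vertices
  of colour \<open>r\<close>, while there are as many colours of the cycles as vertices in \<open>D\<close>.\<close>
lemma no_alternating_cycles:
  assumes b: "b \<in> C" and c: "c \<in> C" and D: "D \<subseteq> L"
  shows "\<not> alternating_cycles D (T (plus_unit y b)) (T (plus_unit y c))"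
proof
  let ?S = "\<lambda>x. T (plus_unit y x)"
  let ?A = "?S b ` D"
  assume "alternating_cycles D (?S b) (?S c)"
  then have "D \<noteq> {}" and inj_b: "inj_on (?S b) D" and same: "?A = ?S c ` D"
    and differ: "\<And>i. i \<in> D \<Longrightarrow> ?S b i \<noteq> ?S c i"
    unfolding alternating_cycles_def by auto
  have fin: "finite D"
    using D finite_L by (rule finite_subset)
  have A_C: "?A \<subseteq> C"
    using colour b D by blast
  have fixed_pair: "\<exists>p\<in>D. \<exists>p'\<in>D. p \<noteq> p' \<and> ?S a p = a \<and> ?S a p' = a" if a: "a \<in> ?A" for a
  proof -
    obtain p where p: "p \<in> D" "?S b p = a"
      using a by blast
    have "a \<in> ?S c ` D"
      using a same by simp
    then obtain p' where p': "p' \<in> D" "?S c p' = a"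
      by blast
    have "a \<in> C"
      using a A_C by blast
    then have "?S a p = a" "?S a p' = a"
      using exchange[OF _ b _ p(2)] exchange[OF _ c _ p'(2)] p(1) p'(1) D by blast+
    moreover have "p \<noteq> p'"
      using differ[OF p(1)] p(2) p'(2) by auto
    ultimately show ?thesis
      using p(1) p'(1) by blast
  qed
  obtain r where r: "r \<in> ?A"
    using \<open>D \<noteq> {}\<close> by blast
  have "?A \<subseteq> ?S r ` D"
  proof
    fix a assume a: "a \<in> ?A"
    obtain p p' where p: "p \<in> D" "p' \<in> D" "p \<noteq> p'" and fixed: "?S a p = a" "?S a p' = a"
      using fixed_pair[OF a] by blast
    have "?S r p = a \<or> ?S r p' = a"
    proof (cases "a = r")
      case False
      moreover have "a \<in> C" "r \<in> C"
        using a r A_C by blast+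
      ultimately show ?thesis
        using fibre_meets_fixed_pair p D fixed by blast
    qed (use fixed in simp)
    with p show "a \<in> ?S r ` D"
      by blast
  qed
  then have "card ?A \<le> card (?S r ` D)"
    by (rule card_mono[OF finite_imageI[OF fin]])
  then have "card D \<le> card (?S r ` D)"
    by (simp add: card_image[OF inj_b])
  moreover have "\<not> inj_on (?S r) D"
  proof -
    obtain p p' where "p \<in> D" "p' \<in> D" "p \<noteq> p'" "?S r p = r" "?S r p' = r"
      using fixed_pair[OF r] by blast
    then show ?thesis
      by (metis inj_onD)
  qed
  then have "card (?S r ` D) \<noteq> card D"
    by (simp add: inj_on_iff_eq_card[OF fin])
  ultimately show False
    using card_image_le[OF fin, of "?S r"] by linarith
qed

lemma fixed_colours_agree:
  assumes c: "c \<in> C" "T (plus_unit y c) l = c" and c': "c' \<in> C" "T (plus_unit y c') l = c'"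
    and l: "l \<in> L" and i: "i \<in> L - {l}"
  shows "T (plus_unit y c) i = T (plus_unit y c') i"
proof (rule ccontr)
  let ?f = "T (plus_unit y c)" and ?g = "T (plus_unit y c')"
  assume differ: "?f i \<noteq> ?g i"
  have fin: "finite (L - {l})"
    using finite_L by blast
  have card_le: "card {j\<in>L - {l}. ?f j = a} \<le> card {j\<in>L - {l}. ?g j = a}" for a
    using card_fibre_delete_fixed[OF c(1) l c(2)] card_fibre_delete_fixed[OF c'(1) l c'(2)] by simp
  obtain D where "D \<subseteq> L - {l}" "alternating_cycles D ?f ?g"
    using exists_alternating_cycles[OF fin i differ card_le] .
  with no_alternating_cycles[OF c(1) c'(1)] show False
    by blast
qed

lemma contraction_fixed_colour:
  assumes "C \<noteq> {}" and "l \<in> L"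
  obtains c where "c \<in> C" "T (plus_unit y c) l = c" "contraction C l T y = T (plus_unit y c)"
proof -
  let ?c = "SOME c. c \<in> C \<and> T (plus_unit y c) l = c"
  have "\<exists>c. c \<in> C \<and> T (plus_unit y c) l = c"
    using fixed_colour_exists[OF assms] by blast
  then have "?c \<in> C \<and> T (plus_unit y ?c) l = ?c"
    by (rule someI_ex)
  then show thesis
    using that unfolding contraction_def by blast
qed

lemma contraction_eq:
  assumes "C \<noteq> {}" and "l \<in> L" and "c \<in> C" "T (plus_unit y c) l = c" and "i \<in> L - {l}"
  shows "contraction C l T y i = T (plus_unit y c) i"
proof -
  obtain c' where "c' \<in> C" "T (plus_unit y c') l = c'" "contraction C l T y = T (plus_unit y c')"
    using contraction_fixed_colour[OF assms(1,2)] .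
  then show ?thesis
    using fixed_colours_agree[OF _ _ assms(3,4) assms(2,5)] by simp
qed

end

lemma tope_family_contraction:
  assumes pre: "pre_trianguloid_on L C T" and fin: "finite L" "finite C"
    and C: "C \<noteq> {}" and l: "l \<in> L"
  shows "tope_family (L - {l}) C (contraction C l T)"
  unfolding tope_family_def
proof (intro allI impI conjI)
  fix v assume v: "lattice_vec C (card (L - {l})) v"
  have "card L = Suc (card (L - {l}))"
    using fin(1) l by (metis card_Suc_Diff1)
  then interpret pre_trianguloid_lower_point L C T "card (L - {l})" v
    using pre fin v by unfold_locales
  obtain c where c: "c \<in> C" "T (plus_unit v c) l = c" "contraction C l T v = T (plus_unit v c)"
    using contraction_fixed_colour[OF C l] .
  show "contraction C l T v ` (L - {l}) \<subseteq> C"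
    using colour[OF c(1)] c(3) by auto
  show "card {i\<in>L - {l}. contraction C l T v i = a} = v a" for a
    using card_fibre_delete_fixed[OF c(1) l c(2)] c(3) by simp
qed

text \<open>The colour \<open>e\<close> of \<open>l\<close> at \<open>y + e\<^sub>a + e\<^sub>b\<close> is a fixed colour of \<open>l\<close> both around
  \<open>y + e\<^sub>a\<close> and around \<open>y + e\<^sub>b\<close>, so both contracted topes are topes around \<open>y + e\<^sub>e\<close>,
  where the exchange condition applies.\<close>
lemma contraction_exchange:
  assumes pre: "pre_trianguloid_on L C T" and fin: "finite L" "finite C"
    and C: "C \<noteq> {}" and l: "l \<in> L"
    and y: "lattice_vec C k y" "Suc k = card (L - {l})" and a: "a \<in> C" and b: "b \<in> C"
  shows "{i\<in>L - {l}. contraction C l T (plus_unit y b) i = a}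
    \<subseteq> {i\<in>L - {l}. contraction C l T (plus_unit y a) i = a}"
proof
  let ?ya = "plus_unit y a" and ?yb = "plus_unit y b"
  have card_L: "card L = Suc (card (L - {l}))"
    using fin(1) l by (metis card_Suc_Diff1)
  have lattice: "lattice_vec C (card (L - {l})) (plus_unit y x)" if "x \<in> C" for x
    unfolding y(2)[symmetric] using lattice_vec_plus_unit[OF fin(2) that] y(1) by blast
  interpret A: pre_trianguloid_lower_point L C T "card (L - {l})" ?ya
    using pre fin card_L lattice[OF a] by unfold_locales
  interpret B: pre_trianguloid_lower_point L C T "card (L - {l})" ?yb
    using pre fin card_L lattice[OF b] by unfold_locales
  define e where "e = T (plus_unit ?ya b) l"
  let ?z = "plus_unit y e"
  have e: "e \<in> C"
    unfolding e_def using A.colour[OF b l] .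
  have e_fixed_a: "T (plus_unit ?ya e) l = e"
    using A.exchange[OF e b l] e_def by simp
  have "T (plus_unit ?yb a) l = e"
    unfolding e_def by (simp add: plus_unit_commute)
  then have e_fixed_b: "T (plus_unit ?yb e) l = e"
    using B.exchange[OF e a l] by blast
  interpret Z: pre_trianguloid_lower_point L C T "card (L - {l})" ?z
    using pre fin card_L lattice[OF e] by unfold_locales
  have z_a: "plus_unit ?ya e = plus_unit ?z a" and z_b: "plus_unit ?yb e = plus_unit ?z b"
    by (rule plus_unit_commute)+
  fix i assume "i \<in> {i\<in>L - {l}. contraction C l T ?yb i = a}"
  then have i: "i \<in> L - {l}" and "contraction C l T ?yb i = a"
    by auto
  then have "T (plus_unit ?z b) i = a"
    using B.contraction_eq[OF C l e e_fixed_b i] z_b by simp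
  then have "T (plus_unit ?z a) i = a"
    using Z.exchange[OF a b] i by blast
  then show "i \<in> {i\<in>L - {l}. contraction C l T ?ya i = a}"
    using A.contraction_eq[OF C l e e_fixed_a i] z_a i by simp
qed

lemma pre_trianguloid_on_contraction:
  assumes "pre_trianguloid_on L C T" and "finite L" "finite C" and "C \<noteq> {}" and "l \<in> L"
  shows "pre_trianguloid_on (L - {l}) C (contraction C l T)"
  using tope_family_contraction[OF assms] contraction_exchange[OF assms]
  unfolding pre_trianguloid_on_def by blast

lemma tope_restricts_to_contraction:
  assumes pre: "pre_trianguloid_on L C T" and fin: "finite L" "finite C"
    and u: "lattice_vec C (card L) u" and l: "l \<in> L"
  obtains y where "lattice_vec C (card (L - {l})) y"
    and "\<And>i. i \<in> L - {l} \<Longrightarrow> contraction C l T y i = T u i"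
proof -
  let ?c = "T u l"
  have tope: "tope_family L C T"
    using pre by (rule pre_trianguloid_on_tope_family)
  have c: "?c \<in> C"
    using tope_family_colour[OF tope u l] .
  have "0 < card {i\<in>L. T u i = ?c}"
    using l fin(1) by (auto simp: card_gt_0_iff)
  then have pos: "0 < u ?c"
    using tope_family_card_fibre[OF tope u] by simp
  have "card L = Suc (card (L - {l}))"
    using fin(1) l by (metis card_Suc_Diff1)
  then have "lattice_vec C (Suc (card (L - {l}))) u"
    using u by simp
  note shrink = lattice_vec_plus_unit_minus[OF fin(2) this c pos]
  interpret pre_trianguloid_lower_point L C T "card (L - {l})" "u(?c := u ?c - 1)"
    using pre fin shrink(1) \<open>card L = _\<close> by unfold_locales
  have "T (plus_unit (u(?c := u ?c - 1)) ?c) l = ?c"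
    by (simp only: shrink(2))
  then have "contraction C l T (u(?c := u ?c - 1)) i = T u i" if "i \<in> L - {l}" for i
    using contraction_eq[OF _ l c _ that] c shrink(2) by auto
  with shrink(1) show thesis
    by (rule that)
qed

lemma tope_family_eq_if_inj_on_same_image:
  assumes tope: "tope_family L C T"
    and u: "lattice_vec C (card L) u" and w: "lattice_vec C (card L) w"
    and inj: "inj_on (T u) L" "inj_on (T w) L" and same: "T u ` L = T w ` L"
  shows "u = w"
proof
  fix a
  show "u a = w a"
    using tope_family_card_fibre[OF tope u, of a] tope_family_card_fibre[OF tope w, of a]
      card_fibre_inj_on[OF inj(1)] card_fibre_inj_on[OF inj(2)] same
    by simp
qed

lemma pre_trianguloid_on_compatible_maps:
  assumes "pre_trianguloid_on L C T" and "finite L" and "finite C"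
    and "lattice_vec C (card L) u" and "lattice_vec C (card L) w"
  shows "compatible_maps L (T u) (T w)"
  using assms
proof (induction "card L" arbitrary: L T u w rule: less_induct)
  case less
  have tope: "tope_family L C T"
    using less.prems(1) by (rule pre_trianguloid_on_tope_family)
  show ?case
    unfolding compatible_maps_def
  proof (intro allI impI)
    fix D assume D: "D \<subseteq> L" and inj: "inj_on (T u) D" "inj_on (T w) D" and same: "T u ` D = T w ` D"
    show "\<forall>i\<in>D. T u i = T w i"
    proof (cases "D = L")
      case True
      then have "u = w"
        using tope_family_eq_if_inj_on_same_image[OF tope less.prems(4,5)] inj same by simp
      then show ?thesis
        by simp
    next
      case False
      then obtain l where l: "l \<in> L" "l \<notin> D"
        using D by blast
      have "C \<noteq> {}"
        using tope_family_colour[OF tope less.prems(4) l(1)] by blast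
      obtain yu where yu: "lattice_vec C (card (L - {l})) yu"
        and eq_u: "\<And>i. i \<in> L - {l} \<Longrightarrow> contraction C l T yu i = T u i"
        using tope_restricts_to_contraction[OF less.prems(1-4) l(1)] by blast
      obtain yw where yw: "lattice_vec C (card (L - {l})) yw"
        and eq_w: "\<And>i. i \<in> L - {l} \<Longrightarrow> contraction C l T yw i = T w i"
        using tope_restricts_to_contraction[OF less.prems(1-3,5) l(1)] by blast
      have "compatible_maps (L - {l}) (contraction C l T yu) (contraction C l T yw)"
      proof (rule less.hyps)
        show "card (L - {l}) < card L"
          using less.prems(2) l(1) by (rule card_Diff1_less)
        show "pre_trianguloid_on (L - {l}) C (contraction C l T)"
          using pre_trianguloid_on_contraction[OF less.prems(1-3) \<open>C \<noteq> {}\<close> l(1)] .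
      qed (use less.prems(2,3) yu yw in auto)
      moreover have "compatible_maps (L - {l}) (contraction C l T yu) (contraction C l T yw)
          \<longleftrightarrow> compatible_maps (L - {l}) (T u) (T w)"
        by (rule compatible_maps_cong) (simp_all add: eq_u eq_w)
      ultimately have "compatible_maps (L - {l}) (T u) (T w)"
        by blast
      moreover have "D \<subseteq> L - {l}"
        using D l(2) by blast
      ultimately show ?thesis
        using inj same unfolding compatible_maps_def by blast
    qed
  qed
qed

lemma pre_trianguloid_on_if_compatible:
  assumes tope: "tope_family L C T" and fin: "finite L" "finite C"
    and compat: "\<And>u w. lattice_vec C (card L) u \<Longrightarrow> lattice_vec C (card L) w \<Longrightarrow>
      compatible_maps L (T u) (T w)"
  shows "pre_trianguloid_on L C T"
  unfolding pre_trianguloid_on_def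
proof (intro conjI allI impI subsetI tope)
  fix k y a b i
  assume y: "lattice_vec C k y" "Suc k = card L" and a: "a \<in> C" and b: "b \<in> C"
    and i: "i \<in> {i\<in>L. T (plus_unit y b) i = a}"
  let ?f = "T (plus_unit y a)" and ?g = "T (plus_unit y b)"
  have lattice: "lattice_vec C (card L) (plus_unit y x)" if "x \<in> C" for x
    unfolding y(2)[symmetric] using lattice_vec_plus_unit[OF fin(2) that] y(1) by blast
  show "i \<in> {i\<in>L. ?f i = a}"
  proof (rule ccontr)
    assume "i \<notin> {i\<in>L. ?f i = a}"
    then have i: "i \<in> L" "?g i = a" "?f i \<noteq> ?g i"
      using i by auto
    have card_le: "card {j\<in>L. ?f j = x} \<le> card {j\<in>L. ?g j = x}"
      if "x \<notin> ?g ` {j\<in>L. ?f j \<noteq> ?g j}" for x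
    proof -
      have "x \<noteq> a"
        using that i by blast
      then show ?thesis
        using tope_family_card_fibre[OF tope lattice[OF a]] tope_family_card_fibre[OF tope lattice[OF b]]
        by (simp add: plus_unit_apply)
    qed
    obtain D where "D \<subseteq> L" "alternating_cycles D ?f ?g"
      using exists_alternating_cycles[OF fin(1) i(1,3) card_le] .
    then show False
      using compatible_maps_no_alternating_cycles compat[OF lattice[OF a] lattice[OF b]] by blast
  qed
qed

theorem pre_trianguloid_on_iff_compatible:
  assumes "finite L" and "finite C"
  shows "pre_trianguloid_on L C T \<longleftrightarrow> tope_family L C T \<and>
    (\<forall>u w. lattice_vec C (card L) u \<longrightarrow> lattice_vec C (card L) w \<longrightarrow> compatible_maps L (T u) (T w))"
proof
  assume pre: "pre_trianguloid_on L C T"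
  show "tope_family L C T \<and>
    (\<forall>u w. lattice_vec C (card L) u \<longrightarrow> lattice_vec C (card L) w \<longrightarrow> compatible_maps L (T u) (T w))"
    using pre_trianguloid_on_tope_family[OF pre] pre_trianguloid_on_compatible_maps[OF pre assms]
    by blast
next
  assume "tope_family L C T \<and>
    (\<forall>u w. lattice_vec C (card L) u \<longrightarrow> lattice_vec C (card L) w \<longrightarrow> compatible_maps L (T u) (T w))"
  then show "pre_trianguloid_on L C T"
    using pre_trianguloid_on_if_compatible[OF _ assms] by blast
qed

section \<open>Topes in the complete bipartite graph\<close>

lemma perfect_matching_graph_iff:
  "perfect_matching ((\<lambda>i. (i, T i)) ` I) I J \<longleftrightarrow> inj_on T I \<and> T ` I = J"
  unfolding perfect_matching_def inj_on_def by blast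

lemma perfect_matching_in_tope_graph:
  assumes "M \<subseteq> tope_graph n T" and "perfect_matching M I J"
  shows "M = (\<lambda>i. (i, T i)) ` I"
proof -
  have graph: "j = T i" if "(i, j) \<in> M" for i j
    using that assms(1) unfolding tope_graph_def by blast
  have left: "M \<subseteq> I \<times> J" and covered: "\<And>i. i \<in> I \<Longrightarrow> \<exists>j. (i, j) \<in> M"
    using assms(2) unfolding perfect_matching_def by auto
  show ?thesis
  proof (intro set_eqI iffI)
    fix p assume "p \<in> M"
    then show "p \<in> (\<lambda>i. (i, T i)) ` I"
      using left graph by (cases p) auto
  next
    fix p assume "p \<in> (\<lambda>i. (i, T i)) ` I"
    then show "p \<in> M"
      using covered graph by auto
  qed
qed

lemma compatible_tope_graph_iff:
  assumes "is_tope n d T"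
  shows "compatible n d (tope_graph n T) (tope_graph n T') \<longleftrightarrow> compatible_maps (left_verts n) T T'"
proof
  assume compat: "compatible n d (tope_graph n T) (tope_graph n T')"
  show "compatible_maps (left_verts n) T T'"
    unfolding compatible_maps_def
  proof (intro allI impI ballI)
    fix D i
    assume D: "D \<subseteq> left_verts n" and inj: "inj_on T D" "inj_on T' D"
      and same: "T ` D = T' ` D" and i: "i \<in> D"
    have J: "T ` D \<subseteq> right_verts d"
      using assms D unfolding is_tope_def by blast
    have sub: "(\<lambda>i. (i, T i)) ` D \<subseteq> tope_graph n T" "(\<lambda>i. (i, T' i)) ` D \<subseteq> tope_graph n T'"
      using D unfolding tope_graph_def by blast+
    have pm: "perfect_matching ((\<lambda>i. (i, T i)) ` D) D (T ` D)"
      "perfect_matching ((\<lambda>i. (i, T' i)) ` D) D (T ` D)"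
      using inj same by (simp_all add: perfect_matching_graph_iff)
    have "(\<lambda>i. (i, T i)) ` D = (\<lambda>i. (i, T' i)) ` D"
      using compat[unfolded compatible_def, rule_format, OF D J sub(1) pm(1) sub(2) pm(2)] .
    with i show "T i = T' i"
      by blast
  qed
next
  assume compat: "compatible_maps (left_verts n) T T'"
  show "compatible n d (tope_graph n T) (tope_graph n T')"
    unfolding compatible_def
  proof (intro allI impI)
    fix I J M M'
    assume I: "I \<subseteq> left_verts n" and M: "M \<subseteq> tope_graph n T" "perfect_matching M I J"
      and M': "M' \<subseteq> tope_graph n T'" "perfect_matching M' I J"
    have "M = (\<lambda>i. (i, T i)) ` I" "M' = (\<lambda>i. (i, T' i)) ` I"
      using M M' by (simp_all add: perfect_matching_in_tope_graph)
    moreover have "inj_on T I" "inj_on T' I" "T ` I = T' ` I"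
      using calculation M(2) M'(2) by (metis perfect_matching_graph_iff)+
    then have "\<forall>i\<in>I. T i = T' i"
      using compat I unfolding compatible_maps_def by blast
    ultimately show "M = M'"
      by (simp cong: image_cong)
  qed
qed

lemma finite_left_verts: "finite (left_verts n)"
  by (simp add: left_verts_def)

lemma finite_right_verts: "finite (right_verts d)"
  by (simp add: right_verts_def)

lemma lattice_point_iff: "lattice_point n d v \<longleftrightarrow> lattice_vec (right_verts d) (card (left_verts n)) v"
  by (simp add: lattice_point_def lattice_vec_def left_verts_def)

lemma tope_family_iff:
  "tope_family (left_verts n) (right_verts d) Tf \<longleftrightarrow>
    (\<forall>v. lattice_point n d v \<longrightarrow> is_tope n d (Tf v) \<and> RD n (Tf v) = v)"
  by (simp add: tope_family_def lattice_point_iff is_tope_def RD_def image_subset_iff fun_eq_iff)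

lemma minus_unit_plus_unit: "minus_unit (plus_unit y a) a = (\<lambda>k. int (y k))"
  by (simp add: minus_unit_def plus_unit_apply fun_eq_iff)

lemma minus_unit_eq_plus_unit:
  assumes eq: "minus_unit v j = minus_unit v' j'" and "j \<noteq> j'"
    and v: "lattice_vec C k v" and C: "finite C" "j \<in> C"
  obtains y where "lattice_vec C (k - 1) y" and "Suc (k - 1) = k"
    and "v = plus_unit y j" and "v' = plus_unit y j'"
proof -
  have eq_at: "int (v x) - (if x = j then 1 else 0) = int (v' x) - (if x = j' then 1 else 0)" for x
    using fun_cong[OF eq, of x] by (simp add: minus_unit_def)
  have v_j: "v j = Suc (v' j)" and v'_j': "v' j' = Suc (v j')"
    using eq_at[of j] eq_at[of j'] assms(2) by simp_all
  have v_x: "v x = v' x" if "x \<noteq> j" "x \<noteq> j'" for x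
    using eq_at[of x] that by simp
  have "v j \<le> sum v C"
    by (rule member_le_sum[OF C(2) _ C(1)]) simp
  then have k: "Suc (k - 1) = k"
    using v v_j unfolding lattice_vec_def by linarith
  let ?y = "v(j := v j - 1)"
  have "lattice_vec C (Suc (k - 1)) v"
    using v unfolding k .
  then have "lattice_vec C (k - 1) ?y" and v_eq: "plus_unit ?y j = v"
    using lattice_vec_plus_unit_minus[of C "k - 1" v j] C v_j by simp_all
  moreover have "plus_unit ?y j' = v'"
    using v_j v'_j' v_x assms(2) by (auto simp: plus_unit_apply fun_eq_iff)
  ultimately show thesis
    using that k by metis
qed

lemma exchange_minus_unit_iff_plus_unit:
  "(\<forall>v v' j j'. lattice_point n d v \<longrightarrow> lattice_point n d v' \<longrightarrow>
      j \<in> right_verts d \<longrightarrow> j' \<in> right_verts d \<longrightarrow> minus_unit v j = minus_unit v' j' \<longrightarrow>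
      tope_preimage n (Tf v') j \<subseteq> tope_preimage n (Tf v) j)
  \<longleftrightarrow> (\<forall>k y a b. lattice_vec (right_verts d) k y \<longrightarrow> Suc k = card (left_verts n) \<longrightarrow>
      a \<in> right_verts d \<longrightarrow> b \<in> right_verts d \<longrightarrow>
      {i\<in>left_verts n. Tf (plus_unit y b) i = a} \<subseteq> {i\<in>left_verts n. Tf (plus_unit y a) i = a})"
  (is "?exchange_minus \<longleftrightarrow> ?exchange_plus")
proof
  let ?L = "left_verts n" and ?C = "right_verts d"
  assume exchange: ?exchange_minus
  show ?exchange_plus
  proof (intro allI impI)
    fix k y a b
    assume y: "lattice_vec ?C k y" "Suc k = card ?L" and a: "a \<in> ?C" and b: "b \<in> ?C"
    have lattice: "lattice_point n d (plus_unit y x)" if "x \<in> ?C" for x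
      unfolding lattice_point_iff y(2)[symmetric]
      using lattice_vec_plus_unit[OF finite_right_verts that] y(1) by blast
    have "minus_unit (plus_unit y a) a = minus_unit (plus_unit y b) b"
      by (simp add: minus_unit_plus_unit)
    then show "{i\<in>?L. Tf (plus_unit y b) i = a} \<subseteq> {i\<in>?L. Tf (plus_unit y a) i = a}"
      using exchange[rule_format, OF lattice[OF a] lattice[OF b] a b]
      unfolding tope_preimage_def by blast
  qed
next
  let ?L = "left_verts n" and ?C = "right_verts d"
  assume exchange: ?exchange_plus
  show ?exchange_minus
  proof (intro allI impI)
    fix v v' j j'
    assume v: "lattice_point n d v" and "lattice_point n d v'" and j: "j \<in> ?C" "j' \<in> ?C"
      and eq: "minus_unit v j = minus_unit v' j'"
    show "tope_preimage n (Tf v') j \<subseteq> tope_preimage n (Tf v) j"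
    proof (cases "j = j'")
      case True
      then have "v' = v"
        using eq by (simp add: minus_unit_def fun_eq_iff)
      then show ?thesis
        by simp
    next
      case False
      obtain y where y: "lattice_vec ?C (card ?L - 1) y" "Suc (card ?L - 1) = card ?L"
        and "v = plus_unit y j" "v' = plus_unit y j'"
        using minus_unit_eq_plus_unit[OF eq False] v finite_right_verts j(1)
        unfolding lattice_point_iff by metis
      with exchange[rule_format, OF y j] show ?thesis
        unfolding tope_preimage_def by simp
    qed
  qed
qed

lemma pre_trianguloid_iff:
  "pre_trianguloid n d Tf \<longleftrightarrow> pre_trianguloid_on (left_verts n) (right_verts d) Tf"
  unfolding pre_trianguloid_def pre_trianguloid_on_def tope_family_iff
    exchange_minus_unit_iff_plus_unit ..

lemma extended_tope_arrangement_iff: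
  "extended_tope_arrangement n d Tf \<longleftrightarrow> tope_family (left_verts n) (right_verts d) Tf \<and>
    (\<forall>u w. lattice_vec (right_verts d) (card (left_verts n)) u \<longrightarrow>
      lattice_vec (right_verts d) (card (left_verts n)) w \<longrightarrow>
      compatible_maps (left_verts n) (Tf u) (Tf w))"
  unfolding extended_tope_arrangement_def tope_family_iff lattice_point_iff
  using compatible_tope_graph_iff by blast

theorem mainTheorem7:
  fixes n d :: nat and Tf :: "(nat \<Rightarrow> nat) \<Rightarrow> (nat \<Rightarrow> nat)"
  assumes "0 < n" and "0 < d"
  shows "(pre_trianguloid n d Tf \<longrightarrow>
            (\<forall>v v'. lattice_point n d v \<longrightarrow> lattice_point n d v' \<longrightarrow>
               compatible n d (tope_graph n (Tf v)) (tope_graph n (Tf v'))))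
         \<and> (pre_trianguloid n d Tf \<longleftrightarrow> extended_tope_arrangement n d Tf)"
proof -
  have "pre_trianguloid n d Tf \<longleftrightarrow> extended_tope_arrangement n d Tf"
    unfolding pre_trianguloid_iff extended_tope_arrangement_iff
    using finite_left_verts finite_right_verts by (rule pre_trianguloid_on_iff_compatible)
  then show ?thesis
    unfolding extended_tope_arrangement_def by blast
qed

end
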